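(* Assume $\langle f\rangle_X=0$, $N/p\in\mathbb N$, and that $\psi$ satisfies (A1) and (A2). Then there exists a constant $C_3$, depending only on $c_\psi,C_\psi,C'_\psi$ and $p$ (in particular independent of $\epsilon$ and $f$), such that \[ \|u^0-u\|_{L^2}\le C_3\,\epsilon\,\|f\|_{L^2}, \] where $u$ solves the atomistic problem and $u^0$ solves the homogenized problem.
   Context: Let $\epsilon>0$ and $N,p$ be positive integers, with the normalization $N\epsilon=1$. Set $X_i=\epsilon i$ ($i\in\mathbb Z$) and $Y_j=j$. $U^N_{\rm per}(\epsilon\mathbb Z)$ is the space of functions $u:\epsilon\mathbb Z\to\mathbb R$ with $u(X_{i+N})=u(X_i)$ for all $i$; $U^N_\#(\epsilon\mathbb Z)$ is the subspace with $\langle u\rangle_X:=\frac1N\sum_{i=1}^N u(X_i)=0$. For $u,v\in U^N_{\rm per}(\epsilon\mathbb Z)$: $\langle u,v\rangle_X=\frac1N\sum_{i=1}^N u(X_i)v(X_i)$, $Du(X_i)=(u(X_{i+1})-u(X_i))/\epsilon$, $\|u\|_{L^2}=(\frac1N\sum_{i=1}^N|u(X_i)|^2)^{1/2}$. A two-scale function is $g:\epsilon\mathbb Z\times\mathbb Z\to\mathbb R$ with $g(X_{i+N},Y_j)=g(X_i,Y_j)=g(X_i,Y_{j+p})$; set $D_Xg(X_i,Y_j)=(g(X_{i+1},Y_j)-g(X_i,Y_j))/\epsilon$, $\langle g\rangle_Y(X_i)=\frac1p\sum_{j=1}^p g(X_i,Y_j)$, $\|g\|_{L^\infty(N,p)}=\max_{1\le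 i\le N,1\le j\le p}|g(X_i,Y_j)|$. $\psi$ is a two-scale function satisfying (A1) $0<c_\psi\le\psi(X_i,Y_j)\le C_\psi$ for all $i,j$, and (A2) $\|D_X\psi\|_{L^\infty(N,p)}\le C'_\psi$. Define $\psi^\epsilon(X_i)=\psi(X_i,X_i/\epsilon)$ and $\psi^0(X_i)=\langle1/\psi(X_i,\cdot)\rangle_Y^{-1}$. $f\in U^N_{\rm per}(\epsilon\mathbb Z)$. Atomistic problem: $u\in U^N_\#(\epsilon\mathbb Z)$ with $\langle\psi^\epsilon Du,Dv\rangle_X=\langle f,v\rangle_X$ for all $v\in U^N_{\rm per}(\epsilon\mathbb Z)$. Homogenized problem: $u^0\in U^N_\#(\epsilon\mathbb Z)$ with $\langle\psi^0Du^0,Dv\rangle_X=\langle f,v\rangle_X$ for all $v\in U^N_{\rm per}(\epsilon\mathbb Z)$. *)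

theory Defs
  imports Complex_Main
begin

(* Lattice epsilon Z is indexed by i :: int, X_i = eps * i.  A function
   u on eps Z is represented by  u :: int => real  with u i = u(X_i).
   A two-scale function g on eps Z x Z is  g :: int => int => real,
   g i j = g(X_i, Y_j). *)

definition per_X :: "nat \<Rightarrow> (int \<Rightarrow> real) \<Rightarrow> bool" where
  "per_X N u \<longleftrightarrow> (\<forall>i. u (i + int N) = u i)"

definition avg_X :: "nat \<Rightarrow> (int \<Rightarrow> real) \<Rightarrow> real" where
  "avg_X N u = (1 / real N) * (\<Sum>i=1..int N. u i)"

definition inner_X :: "nat \<Rightarrow> (int \<Rightarrow> real) \<Rightarrow> (int \<Rightarrow> real) \<Rightarrow> real" where
  "inner_X N u v = (1 / real N) * (\<Sum>i=1..int N. u i * v i)"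

definition Dfw :: "real \<Rightarrow> (int \<Rightarrow> real) \<Rightarrow> int \<Rightarrow> real" where
  "Dfw eps u i = (u (i + 1) - u i) / eps"

definition L2_X :: "nat \<Rightarrow> (int \<Rightarrow> real) \<Rightarrow> real" where
  "L2_X N u = sqrt ((1 / real N) * (\<Sum>i=1..int N. \<bar>u i\<bar>^2))"

definition two_scale :: "nat \<Rightarrow> nat \<Rightarrow> (int \<Rightarrow> int \<Rightarrow> real) \<Rightarrow> bool" where
  "two_scale N p g \<longleftrightarrow> (\<forall>i j. g (i + int N) j = g i j \<and> g i (j + int p) = g i j)"

definition D_X :: "real \<Rightarrow> (int \<Rightarrow> int \<Rightarrow> real) \<Rightarrow> int \<Rightarrow> int \<Rightarrow> real" where
  "D_X eps g i j = (g (i + 1) j - g i j) / eps"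

definition avg_Y :: "nat \<Rightarrow> (int \<Rightarrow> int \<Rightarrow> real) \<Rightarrow> int \<Rightarrow> real" where
  "avg_Y p g i = (1 / real p) * (\<Sum>j=1..int p. g i j)"

definition Linf_Np :: "nat \<Rightarrow> nat \<Rightarrow> (int \<Rightarrow> int \<Rightarrow> real) \<Rightarrow> real" where
  "Linf_Np N p g = Max ((\<lambda>(i, j). \<bar>g i j\<bar>) ` ({1..int N} \<times> {1..int p}))"

(* psi^eps(X_i) = psi(X_i, X_i/eps) = psi(X_i, Y_i) *)
definition psi_eps :: "(int \<Rightarrow> int \<Rightarrow> real) \<Rightarrow> int \<Rightarrow> real" where
  "psi_eps psi i = psi i i"

definition psi_0 :: "nat \<Rightarrow> (int \<Rightarrow> int \<Rightarrow> real) \<Rightarrow> int \<Rightarrow> real" where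
  "psi_0 p psi i = inverse (avg_Y p (\<lambda>i j. 1 / psi i j) i)"

definition solves :: "nat \<Rightarrow> real \<Rightarrow> (int \<Rightarrow> real) \<Rightarrow> (int \<Rightarrow> real) \<Rightarrow> (int \<Rightarrow> real) \<Rightarrow> bool" where
  "solves N eps a f u \<longleftrightarrow> per_X N u \<and> avg_X N u = 0 \<and>
     (\<forall>v. per_X N v \<longrightarrow>
        inner_X N (\<lambda>i. a i * Dfw eps u i) (Dfw eps v) = inner_X N f v)"

end

theory Submission
  imports Defs
begin

(* Both problems are discrete equations in divergence form, so the fluxes psi^eps Du and
   psi^0 Du^0 have the same backward differences eps f and differ only by a constant kappa.
   Hence D(u^0 - u) = tau (1/psi^0 - 1/psi^eps) - kappa/psi^eps with tau = psi^0 Du^0.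
   The flux tau is bounded, with bounded total variation, by the mean of |f|, because it is a
   discrete primitive of eps f and a positively weighted mean of it vanishes.  The oscillating
   factor <1/psi>_Y - 1/psi(X_i, Y_i) has a bounded discrete primitive (a cell corrector; here
   p | N and (A2) enter), so summation by parts makes its partial sums against tau of order one;
   kappa is fixed by periodicity and obeys the same bound.  Thus every increment of u^0 - u is
   O(eps ||f||), and the mean-zero normalisation turns this into the L2 estimate. *)

section \<open>Periodic lattice functions\<close>

lemma per_X_add_mult:
  assumes "per_X N h" shows "h (i + k * int N) = h i"
proof (induction k rule: int_induct[where k=0])
  case (step1 k)
  have "h (i + (k + 1) * int N) = h ((i + k * int N) + int N)" by (simp add: algebra_simps)
  then show ?case using step1 assms by (simp add: per_X_def)
next
  case (step2 k)
  have "h (i + k * int N) = h ((i + (k - 1) * int N) + int N)" by (simp add: algebra_simps)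
  then show ?case using step2 assms by (simp add: per_X_def)
qed simp

lemma per_X_period: "per_X N h \<Longrightarrow> h (int N) = h 0"
  unfolding per_X_def by (drule spec[of _ 0]) simp

lemma per_X_eq_mod:
  assumes "per_X N h" shows "h i = h ((i - 1) mod int N + 1)"
  using per_X_add_mult[OF assms, of "(i - 1) mod int N + 1" "(i - 1) div int N"]
  by (simp add: algebra_simps)

lemma mod_shift_in_period:
  assumes "0 < N" shows "(i - 1) mod int N + 1 \<in> {1..int N}"
proof -
  have "0 \<le> (i - 1) mod int N" "(i - 1) mod int N < int N" using assms by simp_all
  then show ?thesis by simp
qed

lemma sum_per_X_shift:
  assumes "per_X N h" shows "(\<Sum>n<N. h (int n + 1)) = (\<Sum>n<N. h (int n))"
proof -
  have "(\<Sum>n<N. h (int (Suc n)) - h (int n)) = h (0 + int N) - h 0"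
    by (subst sum_lessThan_telescope) simp
  also have "\<dots> = 0" using per_X_period[OF assms] by simp
  finally show ?thesis by (simp add: sum_subtractf add.commute)
qed

lemma sum_per_X_eq_sum_lessThan:
  assumes "per_X N h" shows "(\<Sum>i=1..int N. h i) = (\<Sum>n<N. h (int n))"
proof -
  have "{1..int N} = (\<lambda>n. int n + 1) ` {..<N}"
  proof (rule set_eqI, rule iffI)
    fix i assume "i \<in> {1..int N}"
    then have "i = int (nat (i - 1)) + 1" "nat (i - 1) < N" by auto
    then show "i \<in> (\<lambda>n. int n + 1) ` {..<N}" by blast
  qed auto
  then have "(\<Sum>i=1..int N. h i) = (\<Sum>n<N. h (int n + 1))"
    by (simp add: sum.reindex inj_on_def)
  also have "\<dots> = (\<Sum>n<N. h (int n))" by (rule sum_per_X_shift[OF assms])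
  finally show ?thesis .
qed

lemma per_X_shift: "per_X N g \<Longrightarrow> per_X N (\<lambda>i. g (i + c))"
  unfolding per_X_def by (metis add.commute add.left_commute)

lemma per_X_mult: "per_X N g \<Longrightarrow> per_X N h \<Longrightarrow> per_X N (\<lambda>i. g i * h i)"
  unfolding per_X_def by simp

lemma per_X_diff: "per_X N g \<Longrightarrow> per_X N h \<Longrightarrow> per_X N (\<lambda>i. g i - h i)"
  unfolding per_X_def by simp

lemma per_X_comp: "per_X N g \<Longrightarrow> per_X N (\<lambda>i. F (g i))"
  unfolding per_X_def by simp

lemma per_X_Dfw: "per_X N g \<Longrightarrow> per_X N (Dfw eps g)"
  unfolding per_X_def Dfw_def by (metis add.commute add.left_commute)

lemma sum_Dfw_lessThan: "(\<Sum>k<n. Dfw eps w (int k)) = (w (int n) - w 0) / eps"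
proof -
  have "(\<Sum>k<n. Dfw eps w (int k)) = (\<Sum>k<n. w (int (Suc k)) - w (int k)) / eps"
    by (simp add: Dfw_def sum_divide_distrib add.commute)
  also have "\<dots> = (w (int n) - w 0) / eps" by (subst sum_lessThan_telescope) simp
  finally show ?thesis .
qed

lemma sum_Dfw_per_X: "per_X N g \<Longrightarrow> (\<Sum>n<N. Dfw eps g (int n)) = 0"
  by (simp add: sum_Dfw_lessThan per_X_period)

lemma per_X_eq_0_of_sum_squares:
  assumes N: "0 < N" and r: "per_X N r" and sq: "(\<Sum>n<N. r (int n) * r (int n)) = 0"
  shows "r i = 0"
proof -
  have zero: "r (int n) = 0" if "n < N" for n
    using sq that by (subst (asm) sum_nonneg_eq_0_iff) auto
  define j where "j = (i - 1) mod int N + 1"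
  have "r i = r j" unfolding j_def by (rule per_X_eq_mod[OF r])
  moreover have "j \<in> {1..int N}" unfolding j_def by (rule mod_shift_in_period[OF N])
  moreover have "r (int N) = 0"
    using per_X_period[OF r] zero[OF N] by simp
  ultimately show ?thesis using zero[of "nat j"] by (cases "j = int N") auto
qed

section \<open>Flux form of the discrete equations\<close>

lemma sum_mult_Dfw_per_X:
  assumes s: "per_X N s" and r: "per_X N r"
  shows "(\<Sum>n<N. s (int n) * Dfw eps r (int n)) = (\<Sum>n<N. (s (int n - 1) - s (int n)) / eps * r (int n))"
proof -
  have shift: "(\<Sum>n<N. s (int n) * r (int n + 1)) = (\<Sum>n<N. s (int n - 1) * r (int n))"
    using sum_per_X_shift[OF per_X_mult[OF per_X_shift[OF s, of "-1"] r]] by simp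
  have "(\<Sum>n<N. s (int n) * Dfw eps r (int n))
      = ((\<Sum>n<N. s (int n) * r (int n + 1)) - (\<Sum>n<N. s (int n) * r (int n))) / eps"
    by (simp add: Dfw_def right_diff_distrib diff_divide_distrib sum_divide_distrib sum_subtractf)
  also have "\<dots> = (\<Sum>n<N. (s (int n - 1) - s (int n)) / eps * r (int n))"
    unfolding shift by (simp add: sum_divide_distrib sum_subtractf[symmetric] algebra_simps)
  finally show ?thesis .
qed

text \<open>Testing the weak equation with the residual of the strong one shows that the residual vanishes.\<close>

lemma solves_imp_flux_balance:
  assumes N: "0 < N" and eps: "eps \<noteq> 0" and a: "per_X N a" and f: "per_X N f"
    and sol: "solves N eps a f u"
  shows "a (i - 1) * Dfw eps u (i - 1) - a i * Dfw eps u i = eps * f i"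
proof -
  define s where "s i = a i * Dfw eps u i" for i
  define r where "r i = (s (i - 1) - s i) / eps - f i" for i
  have s_per: "per_X N s"
    unfolding s_def using sol by (intro per_X_mult[OF a] per_X_Dfw) (simp add: solves_def)
  have r_per: "per_X N r"
    unfolding r_def using per_X_shift[OF s_per, of "-1"] s_per f by (simp add: per_X_def)
  have "inner_X N s (Dfw eps r) = inner_X N f r"
    using sol r_per unfolding solves_def s_def by blast
  then have "(\<Sum>n<N. s (int n) * Dfw eps r (int n)) = (\<Sum>n<N. f (int n) * r (int n))"
    using N unfolding inner_X_def
    by (simp add: sum_per_X_eq_sum_lessThan per_X_mult per_X_Dfw s_per r_per f)
  moreover have "r n * r n = (s (n - 1) - s n) / eps * r n - f n * r n" for n
    by (metis left_diff_distrib r_def)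
  ultimately have "(\<Sum>n<N. r (int n) * r (int n)) = 0"
    unfolding sum_mult_Dfw_per_X[OF s_per r_per] by (simp add: sum_subtractf)
  then have "r i = 0" by (rule per_X_eq_0_of_sum_squares[OF N r_per])
  then show ?thesis using eps unfolding r_def s_def by (simp add: field_simps)
qed

lemma eq_add_const_of_same_differences:
  fixes s t :: "int \<Rightarrow> real"
  assumes "\<And>i. s (i - 1) - s i = t (i - 1) - t i"
  shows "s i = t i + (s 0 - t 0)"
proof (induction i rule: int_induct[where k=0])
  case (step1 i)
  then show ?case using assms[of "i + 1"] by simp
next
  case (step2 i)
  then show ?case using assms[of i] by simp
qed simp

section \<open>Discrete cell corrector\<close>

lemma sum_mult_diff_by_parts:
  fixes t F :: "nat \<Rightarrow> real"
  shows "(\<Sum>k<n. t k * (F (Suc k) - F k))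
       = t n * F n - t 0 * F 0 - (\<Sum>k<n. (t (Suc k) - t k) * F (Suc k))"
  by (induction n) (simp_all add: algebra_simps)

lemma abs_sum_mult_diff_le:
  fixes t F :: "nat \<Rightarrow> real"
  assumes F: "\<And>k. \<bar>F k\<bar> \<le> B"
    and t: "\<And>k. k \<le> n \<Longrightarrow> \<bar>t k\<bar> \<le> T"
    and var: "(\<Sum>k<n. \<bar>t (Suc k) - t k\<bar>) \<le> V"
  shows "\<bar>\<Sum>k<n. t k * (F (Suc k) - F k)\<bar> \<le> B * (2 * T + V)"
proof -
  have B: "0 \<le> B" using F[of 0] by simp
  have ends: "\<bar>t k * F k\<bar> \<le> T * B" if "k \<le> n" for k
    unfolding abs_mult using t[OF that] F[of k] B by (intro mult_mono) auto
  have "\<bar>\<Sum>k<n. (t (Suc k) - t k) * F (Suc k)\<bar> \<le> (\<Sum>k<n. \<bar>t (Suc k) - t k\<bar> * B)"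
    by (rule order.trans[OF sum_abs], rule sum_mono) (simp add: abs_mult F mult_left_mono)
  also have "\<dots> \<le> V * B" using mult_right_mono[OF var B] by (simp add: sum_distrib_right)
  finally have "\<bar>\<Sum>k<n. (t (Suc k) - t k) * F (Suc k)\<bar> \<le> V * B" .
  then show ?thesis
    unfolding sum_mult_diff_by_parts using ends[of n] ends[of 0] by (simp add: algebra_simps)
qed

lemma periodic_eq_mod:
  fixes P :: "nat \<Rightarrow> real"
  assumes "\<And>j. P (j + p) = P j"
  shows "P j = P (j mod p)"
proof -
  have "P (r + q * p) = P r" for r q
  proof (induction q)
    case (Suc q)
    then show ?case using assms[of "r + q * p"] by (simp add: ac_simps)
  qed simp
  from this[of "j mod p" "j div p"] show ?thesis by simp
qed

text \<open>A bounded discrete primitive of the oscillating part of a \<open>p\<close>-periodic sequence.\<close>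

definition cell_corrector :: "nat \<Rightarrow> (nat \<Rightarrow> real) \<Rightarrow> nat \<Rightarrow> real" where
  "cell_corrector p P j = (\<Sum>l<j mod p. (\<Sum>m<p. P m) / p - P l)"

lemma cell_corrector_Suc:
  assumes p: "0 < p" and per: "\<And>j. P (j + p) = P j"
  shows "cell_corrector p P (Suc j) - cell_corrector p P j = (\<Sum>m<p. P m) / p - P j"
proof (cases "Suc (j mod p) < p")
  case True
  then have "Suc j mod p = Suc (j mod p)" by (simp add: mod_Suc)
  then show ?thesis using periodic_eq_mod[of P p j, OF per] by (simp add: cell_corrector_def)
next
  case False
  with p have jp: "j mod p = p - 1" "Suc j mod p = 0"
    using mod_less_divisor[OF p, of j] by (simp_all add: mod_Suc)
  have "(\<Sum>l<p. (\<Sum>m<p. P m) / p - P l) = 0" using p by (simp add: sum_subtractf)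
  moreover have "{..<p} = insert (p - 1) {..<p - 1}" using p by auto
  ultimately have "(\<Sum>l<p - 1. (\<Sum>m<p. P m) / p - P l) = - ((\<Sum>m<p. P m) / p - P (p - 1))"
    by simp
  moreover have "P j = P (p - 1)" using periodic_eq_mod[of P p j, OF per] jp by simp
  ultimately show ?thesis using jp by (simp add: cell_corrector_def)
qed

lemma cell_corrector_diff:
  "cell_corrector p P j - cell_corrector p Q j = cell_corrector p (\<lambda>l. P l - Q l) j"
  unfolding cell_corrector_def sum_subtractf[symmetric]
  by (intro sum.cong refl) (simp add: sum_subtractf diff_divide_distrib)

lemma abs_cell_corrector_le:
  assumes p: "0 < p" and R: "\<And>l. \<bar>P l\<bar> \<le> R"
  shows "\<bar>cell_corrector p P j\<bar> \<le> 2 * real p * R"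
proof -
  have mean: "\<bar>(\<Sum>m<p. P m) / p\<bar> \<le> R"
  proof -
    have "\<bar>\<Sum>m<p. P m\<bar> \<le> p * R"
      using order.trans[OF sum_abs sum_mono[of "{..<p}" "\<lambda>m. \<bar>P m\<bar>" "\<lambda>_. R"]] R by simp
    then show ?thesis using p by (simp add: divide_le_eq mult.commute)
  qed
  have "\<bar>cell_corrector p P j\<bar> \<le> (\<Sum>l<j mod p. \<bar>(\<Sum>m<p. P m) / p - P l\<bar>)"
    unfolding cell_corrector_def by (rule sum_abs)
  also have "\<dots> \<le> (\<Sum>l<j mod p. 2 * R)"
    using mean R by (intro sum_mono) (smt (verit) abs_triangle_ineq4)
  also have "\<dots> \<le> p * (2 * R)"
    using R[of 0] mod_less_divisor[OF p, of j] by (simp add: mult_right_mono)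
  finally show ?thesis by simp
qed

text \<open>Discrete two-scale averaging: along the diagonal, a sequence that is \<open>p\<close>-periodic in the
  fast variable and slowly varying in the slow one may be replaced by its cell average.\<close>

lemma abs_sum_oscillation_le:
  fixes P :: "nat \<Rightarrow> nat \<Rightarrow> real" and t :: "nat \<Rightarrow> real"
  assumes p: "0 < p"
    and per: "\<And>s j. P s (j + p) = P s j"
    and R: "\<And>s j. \<bar>P s j\<bar> \<le> R"
    and lip: "\<And>s j. \<bar>P (Suc s) j - P s j\<bar> \<le> \<delta>"
    and t: "\<And>k. k \<le> n \<Longrightarrow> \<bar>t k\<bar> \<le> T"
    and var: "(\<Sum>k<n. \<bar>t (Suc k) - t k\<bar>) \<le> V"
  shows "\<bar>\<Sum>k<n. t k * ((\<Sum>j<p. P k j) / p - P k k)\<bar> \<le> 2 * real p * R * (2 * T + V) + 2 * real n * real p * \<delta> * T"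
proof -
  define \<Phi> where "\<Phi> k = cell_corrector p (P k) k" for k
  define e where "e k = cell_corrector p (P k) (Suc k) - cell_corrector p (P (Suc k)) (Suc k)" for k
  have split: "(\<Sum>j<p. P k j) / p - P k k = (\<Phi> (Suc k) - \<Phi> k) + e k" for k
    using cell_corrector_Suc[of p "P k", OF p per] by (simp add: \<Phi>_def e_def)
  have e: "\<bar>e k\<bar> \<le> 2 * real p * \<delta>" for k
    unfolding e_def cell_corrector_diff
    using abs_cell_corrector_le[OF p, of "\<lambda>l. P k l - P (Suc k) l"] lip by (simp add: abs_minus_commute)
  have T: "0 \<le> T" using t[of 0] by simp
  have err: "\<bar>\<Sum>k<n. t k * e k\<bar> \<le> (\<Sum>k<n. T * (2 * real p * \<delta>))"
  proof (rule order.trans[OF sum_abs], rule sum_mono)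
    fix k assume "k \<in> {..<n}"
    then show "\<bar>t k * e k\<bar> \<le> T * (2 * real p * \<delta>)"
      unfolding abs_mult using t[of k] e[of k] T by (intro mult_mono) auto
  qed
  have main: "\<bar>\<Sum>k<n. t k * (\<Phi> (Suc k) - \<Phi> k)\<bar> \<le> 2 * real p * R * (2 * T + V)"
    using abs_cell_corrector_le[OF p R] by (intro abs_sum_mult_diff_le t var) (simp add: \<Phi>_def)
  have "\<bar>\<Sum>k<n. t k * ((\<Sum>j<p. P k j) / p - P k k)\<bar>
      = \<bar>(\<Sum>k<n. t k * (\<Phi> (Suc k) - \<Phi> k)) + (\<Sum>k<n. t k * e k)\<bar>"
    by (simp add: split distrib_left sum.distrib)
  also have "\<dots> \<le> 2 * real p * R * (2 * T + V) + (\<Sum>k<n. T * (2 * real p * \<delta>))"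
    by (rule order.trans[OF abs_triangle_ineq add_mono[OF main err]])
  finally show ?thesis by (simp add: algebra_simps)
qed

lemma flux_variation_le_avg_abs:
  assumes N: "0 < N" and Ne: "real N * eps = 1" and f: "per_X N f"
    and flux: "\<And>i. t (i - 1) - t i = eps * f i" and n: "n \<le> N"
  shows "(\<Sum>k<n. \<bar>t (int (Suc k)) - t (int k)\<bar>) \<le> avg_X N (\<lambda>i. \<bar>f i\<bar>)"
proof -
  have eps: "0 < eps" using Ne N zero_less_mult_pos[of "real N" eps] by simp
  have step: "\<bar>t (int (Suc k)) - t (int k)\<bar> = eps * \<bar>f (int k + 1)\<bar>" for k
    using flux[of "int k + 1"] eps by (simp add: abs_mult abs_minus_commute add.commute)
  have "(\<Sum>k<n. \<bar>t (int (Suc k)) - t (int k)\<bar>) = eps * (\<Sum>k<n. \<bar>f (int k + 1)\<bar>)"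
    unfolding step sum_distrib_left ..
  also have "\<dots> \<le> eps * (\<Sum>k<N. \<bar>f (int k + 1)\<bar>)"
    using n eps by (intro mult_left_mono sum_mono2) auto
  also have "\<dots> = avg_X N (\<lambda>i. \<bar>f i\<bar>)"
    using Ne N unfolding avg_X_def sum_per_X_eq_sum_lessThan[OF per_X_comp[OF f]]
      sum_per_X_shift[OF per_X_comp[OF f]]
    by (simp add: eq_divide_eq mult.commute)
  finally show ?thesis .
qed

lemma abs_diff_le_variation:
  fixes t :: "nat \<Rightarrow> real"
  shows "\<bar>t n - t 0\<bar> \<le> (\<Sum>k<n. \<bar>t (Suc k) - t k\<bar>)"
  using sum_abs[of "\<lambda>k. t (Suc k) - t k" "{..<n}"] by (simp add: sum_lessThan_telescope)

text \<open>A positively weighted mean-zero sequence changes sign, so it is bounded by its oscillation.\<close>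

lemma abs_le_of_weighted_sum_eq_0:
  fixes t b :: "nat \<Rightarrow> real"
  assumes N: "0 < N" and sum: "(\<Sum>n<N. t n * b n) = 0" and b: "\<And>n. n < N \<Longrightarrow> 0 < b n"
    and osc: "\<And>n. n < N \<Longrightarrow> \<bar>t n - t 0\<bar> \<le> M"
  shows "\<bar>t 0\<bar> \<le> M"
proof (rule ccontr)
  assume "\<not> \<bar>t 0\<bar> \<le> M"
  then have "(\<forall>n<N. 0 < t n) \<or> (\<forall>n<N. t n < 0)"
    using osc by (smt (verit))
  then have "0 < (\<Sum>n<N. t n * b n) \<or> 0 < (\<Sum>n<N. - (t n * b n))"
    using N b by (auto intro!: sum_pos simp: mult_neg_pos)
  then show False using sum by (simp add: sum_negf)
qed

lemma L2_X_le_of_increments: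
  assumes N: "0 < N" and w: "per_X N w" and mean: "(\<Sum>n<N. w (int n)) = 0"
    and incr: "\<And>n. n < N \<Longrightarrow> \<bar>w (int n) - w 0\<bar> \<le> D"
  shows "L2_X N w \<le> 2 * D"
proof -
  have D: "0 \<le> D" using incr[OF N] by simp
  have "real N * \<bar>w 0\<bar> = \<bar>\<Sum>n<N. w 0 - w (int n)\<bar>"
    using mean by (simp add: sum_subtractf abs_mult)
  also have "\<dots> \<le> (\<Sum>n<N. D)"
    using incr by (intro order.trans[OF sum_abs] sum_mono) (simp add: abs_minus_commute)
  finally have w0: "\<bar>w 0\<bar> \<le> D" using N by simp
  have bound: "\<bar>w (int n)\<bar>^2 \<le> (2 * D)^2" if "n < N" for n
    using incr[OF that] w0 by (intro power_mono) auto
  have "(1 / real N) * (\<Sum>i=1..int N. \<bar>w i\<bar>^2) \<le> (1 / real N) * (\<Sum>n<N. (2 * D)^2)"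
    unfolding sum_per_X_eq_sum_lessThan[OF per_X_comp[of N w "\<lambda>x. \<bar>x\<bar>^2", OF w]]
    using bound by (intro mult_left_mono sum_mono) auto
  also have "\<dots> = (2 * D)^2" using N by simp
  finally show ?thesis unfolding L2_X_def using D by (metis real_sqrt_le_mono real_sqrt_abs abs_of_nonneg mult_nonneg_nonneg zero_le_numeral)
qed

lemma avg_abs_le_L2_X:
  assumes N: "0 < N"
  shows "avg_X N (\<lambda>i. \<bar>f i\<bar>) \<le> L2_X N f"
proof -
  define M where "M = avg_X N (\<lambda>i. \<bar>f i\<bar>)"
  have sumM: "(\<Sum>i=1..int N. \<bar>f i\<bar>) = real N * M" using N by (simp add: M_def avg_X_def)
  have M: "0 \<le> M" by (simp add: M_def avg_X_def sum_nonneg)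
  have "0 \<le> (\<Sum>i=1..int N. (\<bar>f i\<bar> - M)^2)" by (simp add: sum_nonneg)
  also have "\<dots> = (\<Sum>i=1..int N. \<bar>f i\<bar>^2) - 2 * M * (\<Sum>i=1..int N. \<bar>f i\<bar>) + real N * M^2"
    by (simp add: power2_diff sum.distrib sum_subtractf sum_distrib_left ac_simps)
  also have "\<dots> = (\<Sum>i=1..int N. \<bar>f i\<bar>^2) - real N * M^2"
    unfolding sumM by (simp add: power2_eq_square)
  finally have "M^2 \<le> (1 / real N) * (\<Sum>i=1..int N. \<bar>f i\<bar>^2)"
    using N by (simp add: field_simps)
  then have "sqrt (M^2) \<le> L2_X N f" unfolding L2_X_def by (rule real_sqrt_le_mono)
  then show ?thesis using M by (simp add: M_def)
qed

lemma flux_bound_of_weighted_mean_zero: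
  assumes N: "0 < N" and Ne: "real N * eps = 1" and f: "per_X N f"
    and flux: "\<And>i. t (i - 1) - t i = eps * f i"
    and mean: "(\<Sum>n<N. t (int n) * b n) = 0" and b: "\<And>n. n < N \<Longrightarrow> 0 < b n"
    and k: "k \<le> N"
  shows "\<bar>t (int k)\<bar> \<le> 2 * avg_X N (\<lambda>i. \<bar>f i\<bar>)"
proof -
  have osc: "\<bar>t (int n) - t 0\<bar> \<le> avg_X N (\<lambda>i. \<bar>f i\<bar>)" if "n \<le> N" for n
    using abs_diff_le_variation[of "\<lambda>k. t (int k)" n] flux_variation_le_avg_abs[OF N Ne f flux that]
    by simp
  have "\<bar>t 0\<bar> \<le> avg_X N (\<lambda>i. \<bar>f i\<bar>)"
    using abs_le_of_weighted_sum_eq_0[of N "\<lambda>n. t (int n)", OF N mean b] osc by simp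
  then show ?thesis using osc[OF k] by linarith
qed

lemma abs_le_Linf_Np:
  assumes N: "0 < N" and p: "0 < p" and g: "two_scale N p g"
  shows "\<bar>g i j\<bar> \<le> Linf_Np N p g"
proof -
  define i' where "i' = (i - 1) mod int N + 1"
  define j' where "j' = (j - 1) mod int p + 1"
  have "g i j = g i' j"
    using per_X_eq_mod[of N "\<lambda>i. g i j"] g unfolding i'_def by (simp add: per_X_def two_scale_def)
  also have "\<dots> = g i' j'"
    using per_X_eq_mod[of p "\<lambda>j. g i' j"] g unfolding j'_def by (simp add: per_X_def two_scale_def)
  finally have "g i j = g i' j'" .
  moreover have "(i', j') \<in> {1..int N} \<times> {1..int p}"
    unfolding i'_def j'_def using mod_shift_in_period[OF N] mod_shift_in_period[OF p] by blast
  ultimately show ?thesis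
    unfolding Linf_Np_def by (intro Max_ge) (auto intro!: image_eqI[where x="(i', j')"])
qed

lemma two_scale_D_X: "two_scale N p g \<Longrightarrow> two_scale N p (D_X eps g)"
  unfolding two_scale_def D_X_def by (metis add.commute add.left_commute)

lemma two_scale_fast_period:
  assumes g: "two_scale N p g" and pN: "p dvd N"
  shows "g i (j + int N) = g i j"
proof -
  obtain q where "N = p * q" using pN by blast
  moreover have "per_X p (g i)" using g by (simp add: per_X_def two_scale_def)
  ultimately show ?thesis using per_X_add_mult[of p "g i" j "int q"] by (simp add: mult.commute)
qed

lemma per_X_psi_eps: "two_scale N p psi \<Longrightarrow> p dvd N \<Longrightarrow> per_X N (psi_eps psi)"
  unfolding per_X_def psi_eps_def by (metis two_scale_def two_scale_fast_period)

lemma per_X_psi_0: "two_scale N p psi \<Longrightarrow> per_X N (psi_0 p psi)"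
  by (simp add: per_X_def psi_0_def avg_Y_def two_scale_def)

lemma abs_psi_step_le:
  assumes N: "0 < N" and p: "0 < p" and eps: "0 < eps" and psi: "two_scale N p psi"
    and C': "Linf_Np N p (D_X eps psi) \<le> C'"
  shows "\<bar>psi (i + 1) j - psi i j\<bar> \<le> eps * C'"
proof -
  have "\<bar>D_X eps psi i j\<bar> \<le> C'"
    using abs_le_Linf_Np[OF N p two_scale_D_X[OF psi]] C' by (rule order.trans)
  then show ?thesis using eps by (simp add: D_X_def abs_divide pos_divide_le_eq mult.commute)
qed

lemma abs_inverse_diff_le:
  fixes x y c :: real
  assumes "0 < c" "c \<le> x" "c \<le> y"
  shows "\<bar>1 / x - 1 / y\<bar> \<le> \<bar>x - y\<bar> / c^2"
proof -
  have "\<bar>1 / x - 1 / y\<bar> = \<bar>x - y\<bar> / (x * y)"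
    using assms by (simp add: field_simps abs_minus_commute)
  also have "\<dots> \<le> \<bar>x - y\<bar> / c^2"
    using assms by (intro divide_left_mono) (auto simp: power2_eq_square intro: mult_mono)
  finally show ?thesis .
qed

lemma abs_sum_inverse_two_scale_le:
  assumes p: "0 < p" and psi: "two_scale N p psi" and c: "0 < c" and lower: "\<And>i j. c \<le> psi i j"
    and lip: "\<And>i j. \<bar>psi (i + 1) j - psi i j\<bar> \<le> \<delta>"
    and t: "\<And>k. k \<le> n \<Longrightarrow> \<bar>t k\<bar> \<le> T"
    and var: "(\<Sum>k<n. \<bar>t (Suc k) - t k\<bar>) \<le> V"
  shows "\<bar>\<Sum>k<n. t k * (avg_Y p (\<lambda>i j. 1 / psi i j) (int k) - 1 / psi (int k) (int k))\<bar>
      \<le> 2 * real p * (1 / c) * (2 * T + V) + 2 * real n * real p * (\<delta> / c^2) * T"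
proof -
  have avg: "avg_Y p (\<lambda>i j. 1 / psi i j) i = (\<Sum>j<p. 1 / psi i (int j)) / p" for i
    using sum_per_X_eq_sum_lessThan[of p "\<lambda>j. 1 / psi i j"] psi
    by (simp add: avg_Y_def per_X_def two_scale_def)
  show ?thesis
    unfolding avg
  proof (rule abs_sum_oscillation_le[where P="\<lambda>k j. 1 / psi (int k) (int j)", OF p _ _ _ t var])
    show "1 / psi (int s) (int (j + p)) = 1 / psi (int s) (int j)" for s j
      using psi by (simp add: two_scale_def)
    show "\<bar>1 / psi (int s) (int j)\<bar> \<le> 1 / c" for s j
      using lower[of "int s" "int j"] c by (simp add: frac_le)
    show "\<bar>1 / psi (int (Suc s)) (int j) - 1 / psi (int s) (int j)\<bar> \<le> \<delta> / c^2" for s j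
    proof -
      have "\<bar>1 / psi (int s + 1) (int j) - 1 / psi (int s) (int j)\<bar>
          \<le> \<bar>psi (int s + 1) (int j) - psi (int s) (int j)\<bar> / c^2"
        by (rule abs_inverse_diff_le[OF c lower lower])
      also have "\<dots> \<le> \<delta> / c^2" using lip by (intro divide_right_mono) auto
      finally show ?thesis by (simp add: add.commute)
    qed
  qed
qed

text \<open>Elimination of the unknown constant \<open>\<kappa>\<close>: it is fixed by the vanishing of the total sum.\<close>

lemma abs_partial_sum_le_of_decomposition:
  fixes d g a :: "nat \<Rightarrow> real"
  assumes d: "\<And>k. d k = g k - \<kappa> * a k" and total: "(\<Sum>k<N. d k) = 0"
    and g: "\<And>n. n \<le> N \<Longrightarrow> \<bar>\<Sum>k<n. g k\<bar> \<le> G"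
    and \<alpha>: "0 < \<alpha>" and a: "\<And>k. \<alpha> \<le> a k" "\<And>k. a k \<le> \<beta>" and n: "n \<le> N"
  shows "\<bar>\<Sum>k<n. d k\<bar> \<le> (1 + \<beta> / \<alpha>) * G"
proof -
  have a0: "0 \<le> a k" for k using a(1)[of k] \<alpha> by linarith
  have "\<kappa> * (\<Sum>k<N. a k) = (\<Sum>k<N. g k)"
    using total by (simp add: d sum_subtractf sum_distrib_left)
  then have "\<bar>\<kappa>\<bar> * (\<Sum>k<N. a k) = \<bar>\<Sum>k<N. g k\<bar>"
    by (metis abs_mult abs_of_nonneg sum_nonneg a0)
  moreover have "\<bar>\<kappa>\<bar> * (N * \<alpha>) \<le> \<bar>\<kappa>\<bar> * (\<Sum>k<N. a k)"
    using sum_mono[of "{..<N}" "\<lambda>_. \<alpha>" a] a(1) by (intro mult_left_mono) auto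
  ultimately have \<kappa>: "\<bar>\<kappa>\<bar> * (N * \<alpha>) \<le> G" using g[of N] by linarith
  have "\<bar>\<kappa> * (\<Sum>k<n. a k)\<bar> \<le> \<bar>\<kappa>\<bar> * (N * \<beta>)"
  proof -
    have "(\<Sum>k<n. a k) \<le> N * \<beta>"
      using sum_mono[of "{..<n}" a "\<lambda>_. \<beta>"] a(2) n a0[of 0] a(2)[of 0]
      by (simp add: mult_right_mono order_trans)
    then show ?thesis by (simp add: abs_mult sum_nonneg a0 mult_left_mono)
  qed
  also have "\<dots> = (\<beta> / \<alpha>) * (\<bar>\<kappa>\<bar> * (N * \<alpha>))" using \<alpha> by simp
  also have "\<dots> \<le> (\<beta> / \<alpha>) * G"
    using \<kappa> \<alpha> a(1)[of 0] a(2)[of 0] by (intro mult_left_mono) auto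
  finally have "\<bar>\<kappa> * (\<Sum>k<n. a k)\<bar> \<le> (\<beta> / \<alpha>) * G" .
  moreover have "(\<Sum>k<n. d k) = (\<Sum>k<n. g k) - \<kappa> * (\<Sum>k<n. a k)"
    by (simp add: d sum_subtractf sum_distrib_left)
  ultimately show ?thesis using g[OF n] by (simp add: algebra_simps)
qed

lemma solves_flux_diff_const:
  assumes N: "0 < N" and eps: "eps \<noteq> 0" and a: "per_X N a" and b: "per_X N b" and f: "per_X N f"
    and u: "solves N eps a f u" and v: "solves N eps b f v"
  shows "\<exists>\<kappa>. \<forall>i. a i * Dfw eps u i = b i * Dfw eps v i + \<kappa>"
proof -
  have "a i * Dfw eps u i = b i * Dfw eps v i + (a 0 * Dfw eps u 0 - b 0 * Dfw eps v 0)" for i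
    using solves_imp_flux_balance[OF N eps a f u] solves_imp_flux_balance[OF N eps b f v]
    by (intro eq_add_const_of_same_differences[where s="\<lambda>i. a i * Dfw eps u i"]) simp
  then show ?thesis by blast
qed

lemma avg_Y_inverse_pos:
  assumes "0 < p" and "\<And>i j. 0 < psi i j"
  shows "0 < avg_Y p (\<lambda>i j. 1 / psi i j) i"
  using assms by (simp add: avg_Y_def sum_pos)

lemma abs_sum_flux_oscillation_le:
  fixes c C' eps :: real and f u0 :: "int \<Rightarrow> real"
  assumes c: "0 < c" and p: "0 < p" and N: "0 < N" and Ne: "real N * eps = 1"
    and psi: "two_scale N p psi" and lower: "\<And>i j. c \<le> psi i j"
    and lip: "\<And>i j. \<bar>psi (i + 1) j - psi i j\<bar> \<le> eps * C'" and C': "0 \<le> C'"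
    and f: "per_X N f" and u0: "solves N eps (psi_0 p psi) f u0" and n: "n \<le> N"
  shows "\<bar>\<Sum>k<n. psi_0 p psi (int k) * Dfw eps u0 (int k)
            * (avg_Y p (\<lambda>i j. 1 / psi i j) (int k) - 1 / psi (int k) (int k))\<bar>
      \<le> (10 * real p / c + 4 * real p * C' / c^2) * avg_X N (\<lambda>i. \<bar>f i\<bar>)"
proof -
  have eps: "0 < eps" using Ne N zero_less_mult_pos[of "real N" eps] by simp
  define M where "M = avg_X N (\<lambda>i. \<bar>f i\<bar>)"
  have M: "0 \<le> M" by (simp add: M_def avg_X_def sum_nonneg)
  define \<tau> where "\<tau> i = psi_0 p psi i * Dfw eps u0 i" for i
  have flux: "\<tau> (i - 1) - \<tau> i = eps * f i" for i
    unfolding \<tau>_def using eps by (intro solves_imp_flux_balance[OF N _ per_X_psi_0[OF psi] f u0]) simp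
  have var: "(\<Sum>k<n. \<bar>\<tau> (int (Suc k)) - \<tau> (int k)\<bar>) \<le> M"
    unfolding M_def by (rule flux_variation_le_avg_abs[OF N Ne f flux n])
  have ib_pos: "0 < avg_Y p (\<lambda>i j. 1 / psi i j) i" for i
    using avg_Y_inverse_pos[OF p] lower c by (meson order_less_le_trans)
  have "\<tau> i * avg_Y p (\<lambda>i j. 1 / psi i j) i = Dfw eps u0 i" for i
    using ib_pos[of i] by (simp add: \<tau>_def psi_0_def)
  then have "(\<Sum>k<N. \<tau> (int k) * avg_Y p (\<lambda>i j. 1 / psi i j) (int k)) = 0"
    using sum_Dfw_per_X[of N u0 eps] u0 by (simp add: solves_def)
  then have \<tau>_bound: "\<bar>\<tau> (int k)\<bar> \<le> 2 * M" if "k \<le> n" for k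
    unfolding M_def using ib_pos that n
    by (intro flux_bound_of_weighted_mean_zero[OF N Ne f flux]) simp_all
  have "\<bar>\<Sum>k<n. \<tau> (int k) * (avg_Y p (\<lambda>i j. 1 / psi i j) (int k) - 1 / psi (int k) (int k))\<bar>
      \<le> 2 * real p * (1 / c) * (2 * (2 * M) + M) + 2 * real n * real p * (eps * C' / c^2) * (2 * M)"
    by (rule abs_sum_inverse_two_scale_le[OF p psi c lower lip \<tau>_bound var])
  also have "\<dots> = 10 * real p / c * M + (n * eps) * (4 * real p * C' / c^2 * M)"
    by (simp add: field_simps)
  also have "\<dots> \<le> 10 * real p / c * M + 1 * (4 * real p * C' / c^2 * M)"
    using n Ne eps C' M by (intro add_left_mono mult_right_mono) (auto simp flip: Ne)
  finally show ?thesis by (simp add: \<tau>_def M_def algebra_simps)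
qed

lemma homogenization_error_estimate:
  fixes c C C' eps :: real and f u u0 :: "int \<Rightarrow> real"
  assumes c: "0 < c" and p: "0 < p" and N: "0 < N" and Ne: "real N * eps = 1" and pN: "p dvd N"
    and psi: "two_scale N p psi" and lower: "\<And>i j. c \<le> psi i j" and upper: "\<And>i j. psi i j \<le> C"
    and C': "Linf_Np N p (D_X eps psi) \<le> C'" and f: "per_X N f"
    and u: "solves N eps (psi_eps psi) f u" and u0: "solves N eps (psi_0 p psi) f u0"
  shows "L2_X N (\<lambda>i. u0 i - u i)
      \<le> 2 * ((10 * real p / c + 4 * real p * C' / c^2) * (1 + C / c)) * eps * L2_X N f"
proof -
  have eps: "0 < eps" using Ne N zero_less_mult_pos[of "real N" eps] by simp
  have lip: "\<bar>psi (i + 1) j - psi i j\<bar> \<le> eps * C'" for i j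
    by (rule abs_psi_step_le[OF N p eps psi C'])
  have C'0: "0 \<le> C'"
    using order_trans[OF abs_ge_zero lip[of 0 0]] eps by (simp add: zero_le_mult_iff)
  have pos: "0 < psi i j" for i j using lower[of i j] c by linarith
  define B where "B = (10 * real p / c + 4 * real p * C' / c^2) * avg_X N (\<lambda>i. \<bar>f i\<bar>)"
  define \<tau> where "\<tau> i = psi_0 p psi i * Dfw eps u0 i" for i
  define ib where "ib i = avg_Y p (\<lambda>i j. 1 / psi i j) i" for i
  obtain \<kappa> where "psi_eps psi i * Dfw eps u i = \<tau> i + \<kappa>" for i
    using solves_flux_diff_const[OF N _ per_X_psi_eps[OF psi pN] per_X_psi_0[OF psi] f u u0] eps
    unfolding \<tau>_def by auto
  then have Du: "Dfw eps u i = (\<tau> i + \<kappa>) * (1 / psi i i)" for i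
    using pos[of i i] by (simp add: psi_eps_def field_simps)
  have Du0: "Dfw eps u0 i = \<tau> i * ib i" for i
    using avg_Y_inverse_pos[of p psi i, OF p pos] by (simp add: \<tau>_def psi_0_def ib_def field_simps)
  have per_u: "per_X N u" and per_u0: "per_X N u0" using u u0 by (simp_all add: solves_def)
  define w where "w i = u0 i - u i" for i
  have Dw: "Dfw eps w i = Dfw eps u0 i - Dfw eps u i" for i
    by (simp add: w_def Dfw_def diff_divide_distrib)
  have incr: "\<bar>w (int n) - w 0\<bar> \<le> eps * ((1 + C / c) * B)" if n: "n \<le> N" for n
  proof -
    have "\<bar>\<Sum>k<n. Dfw eps w (int k)\<bar> \<le> (1 + (1 / c) / (1 / C)) * B"
    proof (rule abs_partial_sum_le_of_decomposition[OF _ _ _ _ _ _ n])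
      show "Dfw eps w (int k)
          = \<tau> (int k) * (ib (int k) - 1 / psi (int k) (int k)) - \<kappa> * (1 / psi (int k) (int k))" for k
        by (simp add: Dw Du Du0 algebra_simps add_divide_distrib)
      show "(\<Sum>k<N. Dfw eps w (int k)) = 0"
        unfolding w_def by (rule sum_Dfw_per_X[OF per_X_diff[OF per_u0 per_u]])
      show "\<bar>\<Sum>k<m. \<tau> (int k) * (ib (int k) - 1 / psi (int k) (int k))\<bar> \<le> B" if "m \<le> N" for m
        unfolding B_def \<tau>_def ib_def
        by (rule abs_sum_flux_oscillation_le[OF c p N Ne psi lower lip C'0 f u0 that])
      show "0 < 1 / C" using c lower[of 0 0] upper[of 0 0] by simp
      show "1 / C \<le> 1 / psi (int k) (int k)" "1 / psi (int k) (int k) \<le> 1 / c" for k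
        using c pos lower upper by (simp_all add: frac_le)
    qed
    moreover have "w (int n) - w 0 = eps * (\<Sum>k<n. Dfw eps w (int k))"
      using eps by (simp add: sum_Dfw_lessThan)
    ultimately show ?thesis using eps c by (simp add: abs_mult)
  qed
  have mean_w: "(\<Sum>n<N. w (int n)) = 0"
    using u u0 N per_u per_u0
    by (simp add: w_def solves_def avg_X_def sum_subtractf sum_per_X_eq_sum_lessThan)
  have "L2_X N w \<le> 2 * (eps * ((1 + C / c) * B))"
    using incr per_X_diff[OF per_u0 per_u] unfolding w_def
    by (intro L2_X_le_of_increments[OF N _ mean_w[unfolded w_def]]) simp_all
  also have "\<dots> \<le> 2 * (eps * ((1 + C / c) * ((10 * real p / c + 4 * real p * C' / c^2) * L2_X N f)))"
    unfolding B_def using avg_abs_le_L2_X[OF N] eps c lower[of 0 0] upper[of 0 0] C'0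
    by (intro mult_left_mono) auto
  finally show ?thesis by (simp add: w_def[abs_def] algebra_simps)
qed

theorem theorem4p6:
  fixes c_psi C_psi C'_psi :: real and p :: nat
  assumes "0 < c_psi" and "0 < p"
  shows "\<exists>C3::real. \<forall>(N::nat) (eps::real) (psi::int \<Rightarrow> int \<Rightarrow> real)
            (f::int \<Rightarrow> real) (u::int \<Rightarrow> real) (u0::int \<Rightarrow> real).
     0 < N \<longrightarrow> real N * eps = 1 \<longrightarrow> p dvd N \<longrightarrow>
     two_scale N p psi \<longrightarrow>
     (\<forall>i j. c_psi \<le> psi i j \<and> psi i j \<le> C_psi) \<longrightarrow>
     Linf_Np N p (D_X eps psi) \<le> C'_psi \<longrightarrow>
     per_X N f \<longrightarrow> avg_X N f = 0 \<longrightarrow>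
     solves N eps (psi_eps psi) f u \<longrightarrow>
     solves N eps (psi_0 p psi) f u0 \<longrightarrow>
     L2_X N (\<lambda>i. u0 i - u i) \<le> C3 * eps * L2_X N f"
proof (intro exI allI impI)
  fix N :: nat and eps :: real and psi :: "int \<Rightarrow> int \<Rightarrow> real" and f u u0 :: "int \<Rightarrow> real"
  assume "0 < N" "real N * eps = 1" "p dvd N" "two_scale N p psi"
    and "\<forall>i j. c_psi \<le> psi i j \<and> psi i j \<le> C_psi"
    and "Linf_Np N p (D_X eps psi) \<le> C'_psi" "per_X N f"
    and "solves N eps (psi_eps psi) f u" "solves N eps (psi_0 p psi) f u0"
  then show "L2_X N (\<lambda>i. u0 i - u i)
      \<le> 2 * ((10 * real p / c_psi + 4 * real p * C'_psi / c_psi^2) * (1 + C_psi / c_psi)) * eps * L2_X N f"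
    using assms by (intro homogenization_error_estimate) auto
qed

end
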